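(* If $\mathbf{X}\in\{0,1\}^{m\times n}$ is totally balanced, then $\mathcal{S}^Q(\mathbf{X})$ is totally balanced for every nonempty $Q\subseteq\mathrm{supp}(\mathbf{X})$.
   Context: $\mathrm{supp}(\mathbf{X})=\{(i,j):x_{i,j}=1\}$. For $t\ge 3$, a $t\times t$ cycle matrix is a binary matrix which, after permuting rows and columns, equals the matrix $\mathbf{C}_t$ whose $1$s are exactly at $(i,i),(i,i+1)$ for $i\in[t-1]$ and at $(t,1),(t,t)$. A binary matrix is totally balanced if it has no submatrix (obtained by deleting rows and columns) that is a $t\times t$ cycle matrix for any $t\ge 3$. Stretching: for a nonempty $Q=\{(\ell_1,k_1),\dots,(\ell_q,k_q)\}\subseteq\mathrm{supp}(\mathbf{X})$ listed in lexicographic order (by row index, then column index), $\mathcal{S}^Q(\mathbf{X})$ is the $(m+q)\times(n+q)$ binary matrix whose top-left $m\times n$ block is $\mathbf{X}$, whose entries at $(\ell_t,n+t)$, $(m+t,k_t)$ and $(m+t,n+t)$ equal $1$ for each $t\in[q]$, and all of whose other entries are $0$. *)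

theory Defs
  imports Main "HOL-Library.Product_Lexorder" "HOL-Combinatorics.Permutations"
begin

text \<open>Binary matrices are represented as functions nat => nat => bool together with
explicit dimensions m (rows) and n (columns); indices are 0-based, i.e. row i < m,
column j < n.\<close>

definition supp :: "nat \<Rightarrow> nat \<Rightarrow> (nat \<Rightarrow> nat \<Rightarrow> bool) \<Rightarrow> (nat \<times> nat) set" where
  "supp m n X = {(i, j). i < m \<and> j < n \<and> X i j}"

definition cycleC :: "nat \<Rightarrow> nat \<Rightarrow> nat \<Rightarrow> bool" where
  "cycleC t i j = (i < t \<and> j < t \<and> (i = j \<or> (i + 1 < t \<and> j = i + 1) \<or> (i = t - 1 \<and> j = 0)))"

definition is_cycle_matrix :: "nat \<Rightarrow> (nat \<Rightarrow> nat \<Rightarrow> bool) \<Rightarrow> bool" where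
  "is_cycle_matrix t A = (3 \<le> t \<and> (\<exists>p q. p permutes {..<t} \<and> q permutes {..<t} \<and>
      (\<forall>i<t. \<forall>j<t. A (p i) (q j) = cycleC t i j)))"

definition totally_balanced :: "nat \<Rightarrow> nat \<Rightarrow> (nat \<Rightarrow> nat \<Rightarrow> bool) \<Rightarrow> bool" where
  "totally_balanced m n X = (\<forall>t\<ge>3. \<forall>r c.
      strict_mono_on {..<t} r \<and> r ` {..<t} \<subseteq> {..<m} \<and>
      strict_mono_on {..<t} c \<and> c ` {..<t} \<subseteq> {..<n} \<longrightarrow>
      \<not> is_cycle_matrix t (\<lambda>i j. X (r i) (c j)))"

text \<open>Stretching: qs lists Q in lexicographic order; the result is an (m+q) x (n+q) matrix.\<close>
definition stretch :: "nat \<Rightarrow> nat \<Rightarrow> (nat \<Rightarrow> nat \<Rightarrow> bool) \<Rightarrow> (nat \<times> nat) set \<Rightarrow> nat \<Rightarrow> nat \<Rightarrow> bool" where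
  "stretch m n X Q = (let qs = sorted_list_of_set Q in (\<lambda>i j.
      if i < m \<and> j < n then X i j
      else (\<exists>t < length qs. (i = fst (qs ! t) \<and> j = n + t) \<or> (i = m + t \<and> j = snd (qs ! t))
                             \<or> (i = m + t \<and> j = n + t))))"

end

theory Submission
  imports Defs
begin

text \<open>Let (l, k) be the s-th element of Q. The new row m + s of the stretched matrix has its
ones exactly in columns k and n + s, and the new column n + s has its ones exactly in rows l and
m + s. In a cycle matrix every row and every column contains two ones, and no two rows have ones
in two common columns. A cycle through row m + s would therefore use columns k and n + s, hence
also row l; but rows l and m + s both have ones in columns k and n + s, as X l k holds. So a cycle
uses only old rows, and then it cannot use a new column, which has a single one among the old
rows. Thus every cycle of the stretched matrix is already a cycle of X.\<close>

lemma cycleC_row_two_ones: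
  assumes "3 \<le> t" "i < t"
  obtains j j' where "j < t" "j' < t" "j \<noteq> j'" "cycleC t i j" "cycleC t i j'"
proof
  show "cycleC t i i" "cycleC t i (if i + 1 < t then i + 1 else 0)"
    using assms by (auto simp: cycleC_def)
qed (use assms in auto)

lemma cycleC_col_two_ones:
  assumes "3 \<le> t" "j < t"
  obtains i i' where "i < t" "i' < t" "i \<noteq> i'" "cycleC t i j" "cycleC t i' j"
proof
  show "cycleC t j j" "cycleC t (if j = 0 then t - 1 else j - 1) j"
    using assms by (auto simp: cycleC_def)
qed (use assms in auto)

lemma cycleC_no_rectangle:
  assumes "3 \<le> t" "j \<noteq> j'"
    and "cycleC t i j" "cycleC t i j'" "cycleC t i' j" "cycleC t i' j'"
  shows "i = i'"
  using assms by (auto simp: cycleC_def)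

definition cycle_embedding :: "nat \<Rightarrow> (nat \<Rightarrow> nat \<Rightarrow> bool) \<Rightarrow> (nat \<Rightarrow> nat) \<Rightarrow> (nat \<Rightarrow> nat) \<Rightarrow> bool" where
  "cycle_embedding t M R C \<longleftrightarrow> 3 \<le> t \<and> inj_on R {..<t} \<and> inj_on C {..<t} \<and>
     (\<forall>i<t. \<forall>j<t. M (R i) (C j) = cycleC t i j)"

lemma cycle_embedding_row_two_ones:
  assumes "cycle_embedding t M R C" "i < t"
  obtains j j' where "j < t" "j' < t" "C j \<noteq> C j'" "M (R i) (C j)" "M (R i) (C j')"
proof -
  from assms obtain j j' where "j < t" "j' < t" "j \<noteq> j'" "cycleC t i j" "cycleC t i j'"
    by (auto simp: cycle_embedding_def elim: cycleC_row_two_ones)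
  with assms show thesis
    by (intro that[of j j']) (auto simp: cycle_embedding_def dest: inj_onD)
qed

lemma cycle_embedding_col_two_ones:
  assumes "cycle_embedding t M R C" "j < t"
  obtains i i' where "i < t" "i' < t" "R i \<noteq> R i'" "M (R i) (C j)" "M (R i') (C j)"
proof -
  from assms obtain i i' where "i < t" "i' < t" "i \<noteq> i'" "cycleC t i j" "cycleC t i' j"
    by (auto simp: cycle_embedding_def elim: cycleC_col_two_ones)
  with assms show thesis
    by (intro that[of i i']) (auto simp: cycle_embedding_def dest: inj_onD)
qed

lemma cycle_embedding_no_rectangle:
  assumes "cycle_embedding t M R C" "i < t" "i' < t" "j < t" "j' < t"
    and "R i \<noteq> R i'" "C j \<noteq> C j'"
    and "M (R i) (C j)" "M (R i) (C j')" "M (R i') (C j)" "M (R i') (C j')"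
  shows False
  using assms cycleC_no_rectangle[of t j j' i i'] by (auto simp: cycle_embedding_def)

lemma cycle_embedding_of_cycle_matrix:
  assumes "is_cycle_matrix t (\<lambda>i j. M (r i) (c j))" "inj_on r {..<t}" "inj_on c {..<t}"
  obtains p q where "p permutes {..<t}" "q permutes {..<t}"
    "cycle_embedding t M (r \<circ> p) (c \<circ> q)"
proof -
  from assms(1) obtain p q where p: "p permutes {..<t}" and q: "q permutes {..<t}"
    and "3 \<le> t" and "\<forall>i<t. \<forall>j<t. M (r (p i)) (c (q j)) = cycleC t i j"
    unfolding is_cycle_matrix_def by blast
  moreover have "inj_on (r \<circ> p) {..<t}" "inj_on (c \<circ> q) {..<t}"
    using assms(2,3) p q
    by (auto intro!: comp_inj_on simp: permutes_image permutes_inj_on)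
  ultimately show thesis
    by (intro that[OF p q]) (simp add: cycle_embedding_def)
qed

lemma is_cycle_matrix_cong:
  assumes "\<And>i j. i < t \<Longrightarrow> j < t \<Longrightarrow> A i j = B i j"
  shows "is_cycle_matrix t A = is_cycle_matrix t B"
proof -
  have "A (p i) (q j) = B (p i) (q j)"
    if "p permutes {..<t}" "q permutes {..<t}" "i < t" "j < t" for p q i j
    using assms permutes_in_image[OF that(1)] permutes_in_image[OF that(2)] that(3,4) by simp
  then show ?thesis unfolding is_cycle_matrix_def by meson
qed

lemma finite_supp: "finite (supp m n X)"
  by (rule finite_subset[of _ "{..<m} \<times> {..<n}"]) (auto simp: supp_def)

lemma sorted_list_of_set_nth_in_supp:
  assumes "Q \<subseteq> supp m n X" "s < card Q"
  shows "fst (sorted_list_of_set Q ! s) < m" "snd (sorted_list_of_set Q ! s) < n"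
    "X (fst (sorted_list_of_set Q ! s)) (snd (sorted_list_of_set Q ! s))"
proof -
  have "finite Q" using assms(1) finite_supp finite_subset by blast
  then have "sorted_list_of_set Q ! s \<in> Q"
    using assms(2) nth_mem[of s "sorted_list_of_set Q"] by simp
  then show "fst (sorted_list_of_set Q ! s) < m" "snd (sorted_list_of_set Q ! s) < n"
    "X (fst (sorted_list_of_set Q ! s)) (snd (sorted_list_of_set Q ! s))"
    using assms(1) by (auto simp: supp_def)
qed

lemma stretch_old:
  "i < m \<Longrightarrow> j < n \<Longrightarrow> stretch m n X Q i j = X i j"
  by (simp add: stretch_def Let_def)

lemma stretch_new_row:
  assumes "Q \<subseteq> supp m n X" "s < card Q"
  shows "stretch m n X Q (m + s) j \<longleftrightarrow> j = snd (sorted_list_of_set Q ! s) \<or> j = n + s"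
  using assms(2)
  by (auto simp: stretch_def Let_def dest: sorted_list_of_set_nth_in_supp(1,2)[OF assms(1)])

lemma stretch_new_col:
  assumes "Q \<subseteq> supp m n X" "s < card Q"
  shows "stretch m n X Q i (n + s) \<longleftrightarrow> i = fst (sorted_list_of_set Q ! s) \<or> i = m + s"
  using assms(2)
  by (auto simp: stretch_def Let_def dest: sorted_list_of_set_nth_in_supp(1,2)[OF assms(1)])

lemma stretch_cycle_embedding_rows_old:
  assumes Q: "Q \<subseteq> supp m n X" and emb: "cycle_embedding t (stretch m n X Q) R C"
    and R: "R ` {..<t} \<subseteq> {..<m + card Q}"
  shows "R ` {..<t} \<subseteq> {..<m}"
proof (rule image_subsetI, rule ccontr)
  fix i assume "i \<in> {..<t}" and "R i \<notin> {..<m}"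
  then have i: "i < t" by simp
  with \<open>R i \<notin> {..<m}\<close> obtain s where s: "s < card Q" "R i = m + s"
    using R by (metis add_less_cancel_left image_subset_iff lessThan_iff le_Suc_ex not_le)
  define l where "l = fst (sorted_list_of_set Q ! s)"
  define k where "k = snd (sorted_list_of_set Q ! s)"
  have l: "l < m" and k: "k < n" and "X l k"
    using sorted_list_of_set_nth_in_supp[OF Q s(1)] by (simp_all add: l_def k_def)
  note new_row = stretch_new_row[OF Q s(1), folded k_def]
  note new_col = stretch_new_col[OF Q s(1), folded l_def]
  obtain j j' where "j < t" "j' < t" "C j \<noteq> C j'"
    "stretch m n X Q (R i) (C j)" "stretch m n X Q (R i) (C j')"
    using cycle_embedding_row_two_ones[OF emb i] .
  then obtain J K where J: "J < t" "C J = n + s" and K: "K < t" "C K = k"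
    using new_row s(2) by metis
  obtain a a' where "a < t" "a' < t" "R a \<noteq> R a'"
    "stretch m n X Q (R a) (C J)" "stretch m n X Q (R a') (C J)"
    using cycle_embedding_col_two_ones[OF emb J(1)] .
  then obtain L where L: "L < t" "R L = l"
    using new_col J(2) by metis
  show False
  proof (rule cycle_embedding_no_rectangle[OF emb i L(1) J(1) K(1)])
    show "R i \<noteq> R L" "C J \<noteq> C K" using s(2) L(2) l J(2) K(2) k by simp_all
    show "stretch m n X Q (R i) (C J)" "stretch m n X Q (R i) (C K)"
      using new_row s(2) J(2) K(2) by simp_all
    show "stretch m n X Q (R L) (C J)" using new_col L(2) J(2) by simp
    show "stretch m n X Q (R L) (C K)" using stretch_old l k \<open>X l k\<close> L(2) K(2) by simp
  qed
qed

lemma stretch_cycle_embedding_cols_old: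
  assumes Q: "Q \<subseteq> supp m n X" and emb: "cycle_embedding t (stretch m n X Q) R C"
    and R: "R ` {..<t} \<subseteq> {..<m}" and C: "C ` {..<t} \<subseteq> {..<n + card Q}"
  shows "C ` {..<t} \<subseteq> {..<n}"
proof (rule image_subsetI, rule ccontr)
  fix j assume "j \<in> {..<t}" and "C j \<notin> {..<n}"
  then have j: "j < t" by simp
  with \<open>C j \<notin> {..<n}\<close> obtain s where s: "s < card Q" "C j = n + s"
    using C by (metis add_less_cancel_left image_subset_iff lessThan_iff le_Suc_ex not_le)
  obtain a a' where "a < t" "a' < t" "R a \<noteq> R a'"
    "stretch m n X Q (R a) (C j)" "stretch m n X Q (R a') (C j)"
    using cycle_embedding_col_two_ones[OF emb j] .
  moreover have "R a < m" "R a' < m" using R \<open>a < t\<close> \<open>a' < t\<close> by auto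
  ultimately show False
    using stretch_new_col[OF Q s(1)] s(2) by simp
qed

theorem lemma3:
  fixes m n :: nat and X :: "nat \<Rightarrow> nat \<Rightarrow> bool" and Q :: "(nat \<times> nat) set"
  assumes "totally_balanced m n X"
    and "Q \<noteq> {}" and "Q \<subseteq> supp m n X"
  shows "totally_balanced (m + card Q) (n + card Q) (stretch m n X Q)"
  unfolding totally_balanced_def
proof (intro allI impI notI)
  fix t :: nat and r c :: "nat \<Rightarrow> nat"
  assume "3 \<le> t" and rc: "strict_mono_on {..<t} r \<and> r ` {..<t} \<subseteq> {..<m + card Q} \<and>
       strict_mono_on {..<t} c \<and> c ` {..<t} \<subseteq> {..<n + card Q}"
    and cycle: "is_cycle_matrix t (\<lambda>i j. stretch m n X Q (r i) (c j))"
  obtain p q where p: "p permutes {..<t}" and q: "q permutes {..<t}"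
    and emb: "cycle_embedding t (stretch m n X Q) (r \<circ> p) (c \<circ> q)"
    using cycle_embedding_of_cycle_matrix[where M = "stretch m n X Q", OF cycle]
      rc strict_mono_on_imp_inj_on by metis
  have images: "(r \<circ> p) ` {..<t} = r ` {..<t}" "(c \<circ> q) ` {..<t} = c ` {..<t}"
    by (simp_all only: image_comp[symmetric] permutes_image[OF p] permutes_image[OF q])
  have rows: "r ` {..<t} \<subseteq> {..<m}"
    using stretch_cycle_embedding_rows_old[OF assms(3) emb] rc images by simp
  have cols: "c ` {..<t} \<subseteq> {..<n}"
    using stretch_cycle_embedding_cols_old[OF assms(3) emb] rows rc images by simp
  have "is_cycle_matrix t (\<lambda>i j. X (r i) (c j))"
  proof (rule is_cycle_matrix_cong[THEN iffD2, OF _ cycle])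
    fix i j assume "i < t" "j < t"
    then show "X (r i) (c j) = stretch m n X Q (r i) (c j)"
      using rows cols stretch_old by (simp add: image_subset_iff)
  qed
  moreover have "\<not> is_cycle_matrix t (\<lambda>i j. X (r i) (c j))"
    using assms(1)[unfolded totally_balanced_def, rule_format, OF \<open>3 \<le> t\<close>] rc rows cols
    by blast
  ultimately show False by contradiction
qed

end
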